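(* Let $r\ge 1$ and $t\ge 3$ be integers and $n=r(t-1)+2$. Then $q(K_1\nabla L_{r,t-1})<n+2t-3$.
   Context: All graphs are finite and simple. $q(G)$ denotes the largest eigenvalue of the signless Laplacian matrix $Q(G)=D(G)+A(G)$ of $G$. For graphs $G,H$ on disjoint vertex sets, $G\nabla H$ is their join (all edges between $V(G)$ and $V(H)$ added), and $rK_s$ denotes the disjoint union of $r$ copies of $K_s$. $L_{r,s}=K_1\nabla rK_s$, i.e. $r$ copies of $K_{s+1}$ sharing exactly one common vertex. Thus $K_1\nabla L_{r,t-1}$ has $r(t-1)+2=n$ vertices. *)

theory Defs
  imports Complex_Main
begin

record 'a graph =
  verts :: "'a set"
  adj :: "'a \<Rightarrow> 'a \<Rightarrow> bool"

definition simple_graph :: "'a graph \<Rightarrow> bool" where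
  "simple_graph G \<longleftrightarrow> finite (verts G) \<and>
     (\<forall>u v. adj G u v \<longrightarrow> u \<in> verts G \<and> v \<in> verts G) \<and>
     (\<forall>u v. adj G u v \<longrightarrow> adj G v u) \<and> (\<forall>u. \<not> adj G u u)"

definition degree :: "'a graph \<Rightarrow> 'a \<Rightarrow> nat" where
  "degree G u = card {v \<in> verts G. adj G u v}"

definition signless_laplacian :: "'a graph \<Rightarrow> 'a \<Rightarrow> 'a \<Rightarrow> real" where
  "signless_laplacian G u v =
     (if u = v then real (degree G u) else 0) + (if adj G u v then 1 else 0)"

definition is_eigenvalue :: "'a set \<Rightarrow> ('a \<Rightarrow> 'a \<Rightarrow> real) \<Rightarrow> real \<Rightarrow> bool" where
  "is_eigenvalue V M c \<longleftrightarrow> (\<exists>x :: 'a \<Rightarrow> real. (\<exists>v\<in>V. x v \<noteq> 0) \<and>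
      (\<forall>u\<in>V. (\<Sum>v\<in>V. M u v * x v) = c * x u))"

definition q :: "'a graph \<Rightarrow> real" where
  "q G = Max {c. is_eigenvalue (verts G) (signless_laplacian G) c}"

definition join :: "'a graph \<Rightarrow> 'b graph \<Rightarrow> ('a + 'b) graph" where
  "join G H = \<lparr> verts = Inl ` verts G \<union> Inr ` verts H,
     adj = (\<lambda>x y. case (x, y) of
        (Inl a, Inl b) \<Rightarrow> adj G a b
      | (Inr a, Inr b) \<Rightarrow> adj H a b
      | (Inl a, Inr b) \<Rightarrow> a \<in> verts G \<and> b \<in> verts H
      | (Inr a, Inl b) \<Rightarrow> a \<in> verts H \<and> b \<in> verts G) \<rparr>"

definition K1 :: "unit graph" where
  "K1 = \<lparr> verts = {()}, adj = (\<lambda>_ _. False) \<rparr>"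

text \<open>rK_s: r disjoint copies of K_s; vertex (i,j) is vertex j of copy i.\<close>
definition copies_K :: "nat \<Rightarrow> nat \<Rightarrow> (nat \<times> nat) graph" where
  "copies_K r s = \<lparr> verts = {..<r} \<times> {..<s},
     adj = (\<lambda>(i, j) (i', j'). i < r \<and> i' < r \<and> j < s \<and> j' < s \<and> i = i' \<and> j \<noteq> j') \<rparr>"

definition L :: "nat \<Rightarrow> nat \<Rightarrow> (unit + nat \<times> nat) graph" where
  "L r s = join K1 (copies_K r s)"

end

theory Submission
  imports Defs
begin

(* K1 \<nabla> L_{r,s} is K_2 (the apex and the centre of L_{r,s}) joined to r disjoint copies of K_s.
   Reading the eigenvalue equation Q x = c x vertex by vertex shows that either c is one of
   s, rs, 2s, or x is constant on the two hub vertices and on all clique vertices, in which case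
   c is a root of the quotient polynomial (c - (rs + 2)) (c - 2s) - 2rs.  So there are finitely
   many eigenvalues (rs is one of them, for the vector e_apex - e_centre), and the larger root of
   the quadratic is below rs + 2s + 1 = n + 2t - 3 as soon as s = t - 1 \<ge> 2. *)

definition neighbours :: "'a graph \<Rightarrow> 'a \<Rightarrow> 'a set" where
  "neighbours G u = {v \<in> verts G. adj G u v}"

lemma degree_eq_card_neighbours: "degree G u = card (neighbours G u)"
  by (simp add: degree_def neighbours_def)

lemma signless_laplacian_sum:
  assumes "finite (verts G)" and "u \<in> verts G"
  shows "(\<Sum>v\<in>verts G. signless_laplacian G u v * x v)
           = real (degree G u) * x u + (\<Sum>v\<in>neighbours G u. x v)"
proof -
  have "(\<Sum>v\<in>verts G. signless_laplacian G u v * x v)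
          = (\<Sum>v\<in>verts G. if u = v then real (degree G u) * x v else 0)
            + (\<Sum>v\<in>verts G. if adj G u v then x v else 0)"
    unfolding signless_laplacian_def distrib_right sum.distrib
    by (intro arg_cong2[where f = "(+)"] sum.cong) simp_all
  also have "\<dots> = real (degree G u) * x u + (\<Sum>v\<in>neighbours G u. x v)"
    using assms by (simp add: neighbours_def sum.inter_filter)
  finally show ?thesis .
qed

lemma finite_quadratic_roots: "finite {c :: real. (c - a) * (c - b) = d}"
proof (cases "\<exists>c. (c - a) * (c - b) = d")
  case True
  then obtain c where c: "(c - a) * (c - b) = d" ..
  have "(c - c') * (c + c' - a - b) = 0" if "(c' - a) * (c' - b) = d" for c'
    using c that by (simp add: algebra_simps)
  then have "{c'. (c' - a) * (c' - b) = d} \<subseteq> {c, a + b - c}"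
    by force
  then show ?thesis
    by (rule finite_subset) simp
qed simp

lemma quadratic_root_lt:
  fixes a s c :: real
  assumes "a \<ge> 0" and "s \<ge> 2" and "(c - (a + 2)) * (c - 2 * s) = 2 * a"
  shows "c < a + 2 * s + 1"
proof (rule ccontr)
  assume "\<not> c < a + 2 * s + 1"
  then have "2 * s - 1 \<le> c - (a + 2)" and "a + 1 \<le> c - 2 * s" by simp_all
  then have "(2 * s - 1) * (a + 1) \<le> (c - (a + 2)) * (c - 2 * s)"
    using assms by (intro mult_mono) simp_all
  moreover have "(2 * s - 1) * (a + 1) = 2 * a + a * (2 * s - 3) + (2 * s - 1)"
    by (simp add: algebra_simps)
  moreover have "a * (2 * s - 3) \<ge> 0"
    using assms by simp
  ultimately show False
    using assms by linarith
qed

abbreviation K1_join_L :: "nat \<Rightarrow> nat \<Rightarrow> (unit + (unit + nat \<times> nat)) graph" where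
  "K1_join_L r s \<equiv> join K1 (L r s)"

abbreviation apex :: "unit + (unit + nat \<times> nat)" where
  "apex \<equiv> Inl ()"

abbreviation centre :: "unit + (unit + nat \<times> nat)" where
  "centre \<equiv> Inr (Inl ())"

abbreviation clique_vertex :: "nat \<Rightarrow> nat \<Rightarrow> unit + (unit + nat \<times> nat)" where
  "clique_vertex i j \<equiv> Inr (Inr (i, j))"

lemma verts_K1_join_L:
  "verts (K1_join_L r s) = {apex, centre} \<union> (\<lambda>(i, j). clique_vertex i j) ` ({..<r} \<times> {..<s})"
  by (auto simp: join_def L_def K1_def copies_K_def)

lemma mem_verts_K1_join_L [simp]:
  "apex \<in> verts (K1_join_L r s)"
  "centre \<in> verts (K1_join_L r s)"
  "clique_vertex i j \<in> verts (K1_join_L r s) \<longleftrightarrow> i < r \<and> j < s"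
  by (auto simp: verts_K1_join_L)

lemma finite_verts_K1_join_L: "finite (verts (K1_join_L r s))"
  by (simp add: verts_K1_join_L)

lemma sum_verts_K1_join_L:
  "(\<Sum>v\<in>verts (K1_join_L r s). f v) = f apex + f centre + (\<Sum>i<r. \<Sum>j<s. f (clique_vertex i j))"
proof -
  have "inj_on (\<lambda>(i, j). clique_vertex i j) A" for A
    by (auto simp: inj_on_def)
  then have "(\<Sum>v\<in>(\<lambda>(i, j). clique_vertex i j) ` ({..<r} \<times> {..<s}). f v)
               = (\<Sum>i<r. \<Sum>j<s. f (clique_vertex i j))"
    by (simp add: sum.reindex sum.cartesian_product case_prod_beta')
  then show ?thesis
    by (simp add: verts_K1_join_L image_iff add.assoc)
qed

lemma card_verts_K1_join_L: "card (verts (K1_join_L r s)) = r * s + 2"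
  using sum_verts_K1_join_L[where f = "\<lambda>_. 1 :: nat"] by simp

lemma adj_K1_join_L [simp]:
  "\<not> adj (K1_join_L r s) apex apex"
  "adj (K1_join_L r s) apex centre"
  "adj (K1_join_L r s) apex (clique_vertex i j) \<longleftrightarrow> i < r \<and> j < s"
  "adj (K1_join_L r s) centre apex"
  "\<not> adj (K1_join_L r s) centre centre"
  "adj (K1_join_L r s) centre (clique_vertex i j) \<longleftrightarrow> i < r \<and> j < s"
  "adj (K1_join_L r s) (clique_vertex i j) apex \<longleftrightarrow> i < r \<and> j < s"
  "adj (K1_join_L r s) (clique_vertex i j) centre \<longleftrightarrow> i < r \<and> j < s"
  "adj (K1_join_L r s) (clique_vertex i j) (clique_vertex i' j')
     \<longleftrightarrow> i < r \<and> i' < r \<and> j < s \<and> j' < s \<and> i = i' \<and> j \<noteq> j'"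
  by (simp_all add: join_def L_def K1_def copies_K_def inj_image_mem_iff)

lemma neighbours_K1_join_L:
  "neighbours (K1_join_L r s) apex = verts (K1_join_L r s) - {apex}"
  "neighbours (K1_join_L r s) centre = verts (K1_join_L r s) - {centre}"
  "i < r \<Longrightarrow> j < s \<Longrightarrow>
     neighbours (K1_join_L r s) (clique_vertex i j) = {apex, centre} \<union> clique_vertex i ` ({..<s} - {j})"
  by (auto simp: neighbours_def verts_K1_join_L)

lemma signless_laplacian_K1_join_L_hub:
  assumes "u \<in> {apex, centre}"
  shows "(\<Sum>v\<in>verts (K1_join_L r s). signless_laplacian (K1_join_L r s) u v * x v)
           = real (r * s) * x u + (\<Sum>v\<in>verts (K1_join_L r s). x v)"
proof -
  let ?V = "verts (K1_join_L r s)"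
  have u: "u \<in> ?V" and N: "neighbours (K1_join_L r s) u = ?V - {u}"
    using assms by (auto simp: neighbours_K1_join_L)
  have "real (degree (K1_join_L r s) u) = real (r * s) + 1"
    using u by (simp add: degree_eq_card_neighbours N finite_verts_K1_join_L card_verts_K1_join_L)
  moreover have "(\<Sum>v\<in>neighbours (K1_join_L r s) u. x v) = (\<Sum>v\<in>?V. x v) - x u"
    using u by (simp add: N sum_diff1 finite_verts_K1_join_L)
  ultimately show ?thesis
    unfolding signless_laplacian_sum[OF finite_verts_K1_join_L u] by (simp add: algebra_simps)
qed

lemma signless_laplacian_K1_join_L_clique:
  assumes "i < r" and "j < s"
  shows "(\<Sum>v\<in>verts (K1_join_L r s). signless_laplacian (K1_join_L r s) (clique_vertex i j) v * x v)
           = real s * x (clique_vertex i j) + x apex + x centre + (\<Sum>j'<s. x (clique_vertex i j'))"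
proof -
  have N: "neighbours (K1_join_L r s) (clique_vertex i j)
             = insert apex (insert centre (clique_vertex i ` ({..<s} - {j})))"
    using assms by (simp add: neighbours_K1_join_L)
  have inj: "inj_on (clique_vertex i) A" for A
    by (simp add: inj_on_def)
  have "real (degree (K1_join_L r s) (clique_vertex i j)) = real s + 1"
    using assms by (simp add: degree_eq_card_neighbours N card_image[OF inj] image_iff)
  moreover have "(\<Sum>v\<in>neighbours (K1_join_L r s) (clique_vertex i j). x v)
                   = x apex + x centre + (\<Sum>j'<s. x (clique_vertex i j')) - x (clique_vertex i j)"
    using assms by (simp add: N sum.reindex[OF inj] image_iff sum_diff1)
  moreover have "clique_vertex i j \<in> verts (K1_join_L r s)"
    using assms by simp
  ultimately show ?thesis
    by (subst signless_laplacian_sum[OF finite_verts_K1_join_L]) (simp_all add: algebra_simps)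
qed

lemma eigenvalue_equations_cases:
  fixes r s :: nat and xa xb c :: real and y :: "nat \<Rightarrow> nat \<Rightarrow> real"
  defines "S \<equiv> xa + xb + (\<Sum>i<r. \<Sum>j<s. y i j)"
  assumes "0 < s"
    and apex_eq: "c * xa = real (r * s) * xa + S"
    and centre_eq: "c * xb = real (r * s) * xb + S"
    and clique_eq: "\<And>i j. i < r \<Longrightarrow> j < s \<Longrightarrow> c * y i j = real s * y i j + xa + xb + (\<Sum>j'<s. y i j')"
    and nonzero: "xa \<noteq> 0 \<or> xb \<noteq> 0 \<or> (\<exists>i<r. \<exists>j<s. y i j \<noteq> 0)"
  shows "c = real s \<or> c = real (r * s) \<or> c = 2 * real s \<or>
         (c - real (r * s + 2)) * (c - 2 * real s) = 2 * real (r * s)"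
proof (rule ccontr)
  assume "\<not> ?thesis"
  then have "c - real s \<noteq> 0" and "c - real (r * s) \<noteq> 0" and "c - 2 * real s \<noteq> 0"
    and quadratic: "(c - real (r * s + 2)) * (c - 2 * real s) - 2 * real (r * s) \<noteq> 0"
    by auto
  have row_const: "y i j = y i 0" if "i < r" "j < s" for i j
  proof -
    have "(c - real s) * y i j = (c - real s) * y i 0"
      using clique_eq[OF that] clique_eq[OF that(1) \<open>0 < s\<close>] by (simp add: algebra_simps)
    then show ?thesis
      using \<open>c - real s \<noteq> 0\<close> by simp
  qed
  have "(c - real (r * s)) * (xa - xb) = 0"
    using apex_eq centre_eq by (simp add: algebra_simps)
  then have "xb = xa"
    using \<open>c - real (r * s) \<noteq> 0\<close> by simp
  have row_sum: "(\<Sum>j<s. y i j) = real s * y i 0" if "i < r" for i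
  proof -
    have "(\<Sum>j<s. y i j) = (\<Sum>j<s. y i 0)"
      by (rule sum.cong[OF refl], rule row_const[OF that]) simp
    then show ?thesis
      by simp
  qed
  have row: "(c - 2 * real s) * y i 0 = 2 * xa" if "i < r" for i
    using clique_eq[OF that \<open>0 < s\<close>] row_sum[OF that] \<open>xb = xa\<close> by (simp add: algebra_simps)
  have "(\<Sum>i<r. \<Sum>j<s. y i j) = real s * (\<Sum>i<r. y i 0)"
    by (simp add: sum_distrib_left row_sum)
  moreover have "(c - 2 * real s) * (\<Sum>i<r. y i 0) = 2 * real r * xa"
    using row by (simp add: sum_distrib_left)
  ultimately have "(c - 2 * real s) * (\<Sum>i<r. \<Sum>j<s. y i j) = 2 * real (r * s) * xa"
    by (simp add: algebra_simps)
  then have "(c - 2 * real s) * S = (c - 2 * real s) * (2 * xa) + 2 * real (r * s) * xa"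
    unfolding S_def \<open>xb = xa\<close> distrib_left by simp
  moreover have "S = (c - real (r * s)) * xa"
    using apex_eq by (simp add: left_diff_distrib)
  ultimately have "((c - real (r * s + 2)) * (c - 2 * real s) - 2 * real (r * s)) * xa = 0"
    by (simp add: algebra_simps)
  then have "xa = 0"
    using quadratic by simp
  then have "y i j = 0" if "i < r" "j < s" for i j
    using row_const[OF that] row[OF that(1)] \<open>c - 2 * real s \<noteq> 0\<close> by simp
  then show False
    using nonzero \<open>xb = xa\<close> \<open>xa = 0\<close> by auto
qed

lemma eigenvalue_K1_join_L_cases:
  assumes "0 < s"
    and "is_eigenvalue (verts (K1_join_L r s)) (signless_laplacian (K1_join_L r s)) c"
  shows "c = real s \<or> c = real (r * s) \<or> c = 2 * real s \<or>
         (c - real (r * s + 2)) * (c - 2 * real s) = 2 * real (r * s)"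
proof -
  let ?V = "verts (K1_join_L r s)"
  obtain x where nonzero: "\<exists>v\<in>?V. x v \<noteq> 0"
    and eigen: "\<And>u. u \<in> ?V \<Longrightarrow> (\<Sum>v\<in>?V. signless_laplacian (K1_join_L r s) u v * x v) = c * x u"
    using assms(2) unfolding is_eigenvalue_def by blast
  show ?thesis
  proof (rule eigenvalue_equations_cases[where xa = "x apex" and xb = "x centre"
                                           and y = "\<lambda>i j. x (clique_vertex i j)"])
    show "c * x apex = real (r * s) * x apex + (x apex + x centre + (\<Sum>i<r. \<Sum>j<s. x (clique_vertex i j)))"
      using eigen[of apex] signless_laplacian_K1_join_L_hub[of apex r s x]
      by (simp add: sum_verts_K1_join_L)
    show "c * x centre = real (r * s) * x centre + (x apex + x centre + (\<Sum>i<r. \<Sum>j<s. x (clique_vertex i j)))"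
      using eigen[of centre] signless_laplacian_K1_join_L_hub[of centre r s x]
      by (simp add: sum_verts_K1_join_L)
    show "c * x (clique_vertex i j) = real s * x (clique_vertex i j) + x apex + x centre
            + (\<Sum>j'<s. x (clique_vertex i j'))" if "i < r" and "j < s" for i j
      using eigen[of "clique_vertex i j"] signless_laplacian_K1_join_L_clique[OF that, of x] that
      by simp
    show "x apex \<noteq> 0 \<or> x centre \<noteq> 0 \<or> (\<exists>i<r. \<exists>j<s. x (clique_vertex i j) \<noteq> 0)"
      using nonzero by (auto simp: verts_K1_join_L)
  qed fact
qed

lemma eigenvalue_K1_join_L_rs:
  "is_eigenvalue (verts (K1_join_L r s)) (signless_laplacian (K1_join_L r s)) (real (r * s))"
proof -
  define x :: "unit + (unit + nat \<times> nat) \<Rightarrow> real" where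
    "x v = (if v = apex then 1 else if v = centre then -1 else 0)" for v
  have "(\<Sum>v\<in>verts (K1_join_L r s). signless_laplacian (K1_join_L r s) u v * x v) = real (r * s) * x u"
    if "u \<in> verts (K1_join_L r s)" for u
  proof -
    from that consider "u = apex" | "u = centre" | i j where "i < r" "j < s" "u = clique_vertex i j"
      by (auto simp: verts_K1_join_L)
    moreover have "(\<Sum>v\<in>verts (K1_join_L r s). x v) = 0"
      by (simp add: sum_verts_K1_join_L x_def)
    ultimately show ?thesis
      by cases (simp_all add: signless_laplacian_K1_join_L_hub signless_laplacian_K1_join_L_clique x_def)
  qed
  moreover have "apex \<in> verts (K1_join_L r s)" and "x apex \<noteq> 0"
    by (simp_all add: x_def)
  ultimately show ?thesis
    unfolding is_eigenvalue_def by blast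
qed

lemma finite_eigenvalues_K1_join_L:
  assumes "0 < s"
  shows "finite {c. is_eigenvalue (verts (K1_join_L r s)) (signless_laplacian (K1_join_L r s)) c}"
proof (rule finite_subset)
  show "{c. is_eigenvalue (verts (K1_join_L r s)) (signless_laplacian (K1_join_L r s)) c}
          \<subseteq> {real s, real (r * s), 2 * real s} \<union> {c. (c - real (r * s + 2)) * (c - 2 * real s) = 2 * real (r * s)}"
    using eigenvalue_K1_join_L_cases[OF assms] by blast
  show "finite ({real s, real (r * s), 2 * real s} \<union> {c. (c - real (r * s + 2)) * (c - 2 * real s) = 2 * real (r * s)})"
    using finite_quadratic_roots by blast
qed

lemma eigenvalue_K1_join_L_lt:
  assumes "s \<ge> 2"
    and "is_eigenvalue (verts (K1_join_L r s)) (signless_laplacian (K1_join_L r s)) c"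
  shows "c < real (r * s) + 2 * real s + 1"
proof -
  have "0 < s"
    using assms(1) by simp
  with assms(2) consider "c = real s" | "c = real (r * s)" | "c = 2 * real s"
    | "(c - real (r * s + 2)) * (c - 2 * real s) = 2 * real (r * s)"
    using eigenvalue_K1_join_L_cases by blast
  then show ?thesis
  proof cases
    case 4
    then have "(c - (real (r * s) + 2)) * (c - 2 * real s) = 2 * real (r * s)"
      by (simp add: add.commute)
    then show ?thesis
      using assms(1) by (intro quadratic_root_lt) simp_all
  qed (simp_all add: add_pos_nonneg add_nonneg_pos)
qed

theorem lemma2p6:
  fixes r t n :: nat
  assumes "r \<ge> 1" and "t \<ge> 3" and "n = r * (t - 1) + 2"
  shows "q (join K1 (L r (t - 1))) < real n + 2 * real t - 3"
proof -
  define s where "s = t - 1"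
  let ?E = "{c. is_eigenvalue (verts (K1_join_L r s)) (signless_laplacian (K1_join_L r s)) c}"
  have "s \<ge> 2"
    using assms(2) by (simp add: s_def)
  moreover have "real (r * s) \<in> ?E"
    unfolding mem_Collect_eq by (rule eigenvalue_K1_join_L_rs)
  ultimately have "Max ?E \<in> ?E"
    using finite_eigenvalues_K1_join_L[of s r] by (intro Max_in) auto
  then have "Max ?E < real (r * s) + 2 * real s + 1"
    using eigenvalue_K1_join_L_lt[OF \<open>s \<ge> 2\<close>] by blast
  moreover have "real n + 2 * real t - 3 = real (r * s) + 2 * real s + 1"
    using assms(2,3) by (simp add: s_def of_nat_diff)
  ultimately show ?thesis
    by (simp add: q_def s_def)
qed

end
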